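(* Let $N\ge 2$, let $s=(s_1,\dots,s_{N-1})\in\mathbb{C}^{N-1}$ be generic, set $x_a=2s_a-2s_{a-1}$ ($1\le a\le N$, $s_0=s_N=0$), and let $$F(s)=\mathbb{1}\otimes\mathbb{1}-\sum_{1\le a<b\le N}\frac{2}{x_a-x_b}\,E_{ab}\otimes E_{ba}.$$ Let $R(u)=\dfrac{\rho(u)}{u+1}\big(u\,\mathbb{1}\otimes\mathbb{1}+P\big)$ be the (normalised) Yang $R$-matrix of the double Yangian of $sl_N$ in the fundamental representation, with $$\rho(u)=\frac{\Gamma_1(u|N)\,\Gamma_1(u+N|N)}{\Gamma_1(u+1|N)\,\Gamma_1(u+N-1|N)}.$$ Then $R(u,s):=F_{21}(s)\,R(u)\,F_{12}(s)^{-1}$, written as $\sum R_{i_1i_2}^{j_1j_2}E_{i_1j_1}\otimes E_{i_2j_2}$, has non-vanishing entries ($1\le a,b\le N$, $a\ne b$ in the last two) $$R_{aa}^{aa}=\rho(u),\qquad R_{ab}^{ab}=\rho(u)\begin{cases}\dfrac{u}{u+1}& b>a,\\[2mm] \Big(1-\dfrac{4}{(x_a-x_b)^2}\Big)\dfrac{u}{u+1} & b<a,\end{cases}\qquad R_{ab}^{ba}=\rho(u)\Big(1+\frac{2u}{x_a-x_b}\Big)\frac{1}{u+1},$$ and it satisfies the dynamical Yang--Baxter equation with additive spectral parameter $$R_{12}(\beta,s+h^{(3)})\,R_{13}(\beta+\beta',s)\,R_{23}(\beta',s+h^{(1)})=R_{23}(\beta',s)\,R_{13}(\beta+\beta',s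+h^{(2)})\,R_{12}(\beta,s).$$
   Context: $E_{ab}$ is the $N\times N$ elementary matrix, $P$ the flip of $\mathbb{C}^N\otimes\mathbb{C}^N$, $F_{21}=PF_{12}P$. $\Gamma_1(x|\omega)=\frac{\omega^{x/\omega}}{\sqrt{2\pi\omega}}\Gamma(x/\omega)$. Shift notation: with $h_j=E_{jj}-E_{j+1,j+1}$, $(d_{ij})$ the inverse Cartan matrix of $sl_N$ and $h^\vee_i=\sum_j d_{ij}h_j$, the expression $R_{12}(\beta,s+h^{(3)})$ means $R_{12}(\beta,s)$ with each $s_i$ replaced by $s_i+h^\vee_i$ acting (diagonally) in the third tensor factor of $(\mathbb{C}^N)^{\otimes3}$; similarly for $h^{(1)},h^{(2)}$. *)

theory Defs
  imports "HOL-Analysis.Analysis"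
begin

text \<open>Operators on the k-fold tensor power of C^N are represented by their matrix
  entries: an index of the tensor power is a list of length k with entries in {1..N};
  M I J is the coefficient of E_{I!0 J!0} (x) ... (x) E_{I!(k-1) J!(k-1)}.
  All equalities of operators are stated entrywise on the index set.\<close>

type_synonym op = "nat list \<Rightarrow> nat list \<Rightarrow> complex"

definition idx :: "nat \<Rightarrow> nat \<Rightarrow> nat list set" where
  "idx N k = {I. length I = k \<and> set I \<subseteq> {1..N}}"

definition mmul :: "nat \<Rightarrow> nat \<Rightarrow> op \<Rightarrow> op \<Rightarrow> op" where
  "mmul N k A B = (\<lambda>I J. \<Sum>K\<in>idx N k. A I K * B K J)"

definition mone :: op where
  "mone = (\<lambda>I J. if I = J then 1 else 0)"

definition minv :: "nat \<Rightarrow> nat \<Rightarrow> op \<Rightarrow> op" where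
  "minv N k A = (SOME B. (\<forall>I J. (I \<notin> idx N k \<or> J \<notin> idx N k) \<longrightarrow> B I J = 0) \<and>
      (\<forall>I\<in>idx N k. \<forall>J\<in>idx N k. mmul N k A B I J = mone I J \<and> mmul N k B A I J = mone I J))"

definition elem :: "nat \<Rightarrow> nat \<Rightarrow> nat \<Rightarrow> nat \<Rightarrow> complex" where
  "elem a b i j = (if i = a \<and> j = b then 1 else 0)"

definition tens2 :: "(nat \<Rightarrow> nat \<Rightarrow> complex) \<Rightarrow> (nat \<Rightarrow> nat \<Rightarrow> complex) \<Rightarrow> op" where
  "tens2 A B = (\<lambda>I J. A (I!0) (J!0) * B (I!1) (J!1))"

definition flipP :: op where
  "flipP = (\<lambda>I J. if I!0 = J!1 \<and> I!1 = J!0 then 1 else 0)"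

definition xcoord :: "nat \<Rightarrow> (nat \<Rightarrow> complex) \<Rightarrow> nat \<Rightarrow> complex" where
  "xcoord N s a = (let sv = (\<lambda>i. if 1 \<le> i \<and> i \<le> N - 1 then s i else 0)
                   in 2 * sv a - 2 * sv (a - 1))"

definition Fmat :: "nat \<Rightarrow> (nat \<Rightarrow> complex) \<Rightarrow> op" where
  "Fmat N s = (\<lambda>I J. mone I J -
     (\<Sum>a\<in>{1..N}. \<Sum>b\<in>{a<..N}.
        2 / (xcoord N s a - xcoord N s b) * tens2 (elem a b) (elem b a) I J))"

definition Fmat21 :: "nat \<Rightarrow> (nat \<Rightarrow> complex) \<Rightarrow> op" where
  "Fmat21 N s = mmul N 2 flipP (mmul N 2 (Fmat N s) flipP)"

definition Gamma1 :: "complex \<Rightarrow> real \<Rightarrow> complex" where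
  "Gamma1 x \<omega> = (complex_of_real \<omega>) powr (x / complex_of_real \<omega>)
        / complex_of_real (sqrt (2 * pi * \<omega>)) * Gamma (x / complex_of_real \<omega>)"

definition rho :: "nat \<Rightarrow> complex \<Rightarrow> complex" where
  "rho N u = Gamma1 u (real N) * Gamma1 (u + of_nat N) (real N)
       / (Gamma1 (u + 1) (real N) * Gamma1 (u + of_nat N - 1) (real N))"

definition Ryang :: "nat \<Rightarrow> complex \<Rightarrow> op" where
  "Ryang N u = (\<lambda>I J. rho N u / (u + 1) * (u * mone I J + flipP I J))"

definition Rdyn :: "nat \<Rightarrow> complex \<Rightarrow> (nat \<Rightarrow> complex) \<Rightarrow> op" where
  "Rdyn N u s = mmul N 2 (Fmat21 N s) (mmul N 2 (Ryang N u) (minv N 2 (Fmat N s)))"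

definition invcartan :: "nat \<Rightarrow> nat \<Rightarrow> nat \<Rightarrow> complex" where
  "invcartan N i j = of_nat (min i j) - of_nat (i * j) / of_nat N"

text \<open>Eigenvalue of h^vee_i = sum_j d_ij h_j (h_j = E_jj - E_{j+1,j+1}) on basis vector e_c.\<close>
definition hvee_eig :: "nat \<Rightarrow> nat \<Rightarrow> nat \<Rightarrow> complex" where
  "hvee_eig N i c = (\<Sum>j\<in>{1..N-1}. invcartan N i j *
       ((if c = j then 1 else 0) - (if c = j + 1 then 1 else 0)))"

text \<open>s + h^vee evaluated on e_c: s_i replaced by s_i + (eigenvalue of h^vee_i on e_c).\<close>
definition sshift :: "nat \<Rightarrow> (nat \<Rightarrow> complex) \<Rightarrow> nat \<Rightarrow> nat \<Rightarrow> complex" where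
  "sshift N s c = (\<lambda>i. s i + hvee_eig N i c)"

text \<open>Embeddings into the triple tensor product; G c is the operator used when the
  remaining (spectator) factor is in basis state e_c (diagonal action).\<close>
definition lift12 :: "(nat \<Rightarrow> op) \<Rightarrow> op" where
  "lift12 G = (\<lambda>I J. if I!2 = J!2 then G (I!2) [I!0, I!1] [J!0, J!1] else 0)"

definition lift13 :: "(nat \<Rightarrow> op) \<Rightarrow> op" where
  "lift13 G = (\<lambda>I J. if I!1 = J!1 then G (I!1) [I!0, I!2] [J!0, J!2] else 0)"

definition lift23 :: "(nat \<Rightarrow> op) \<Rightarrow> op" where
  "lift23 G = (\<lambda>I J. if I!0 = J!0 then G (I!0) [I!1, I!2] [J!1, J!2] else 0)"

end

theory Submission
  imports Defs
begin

text \<open>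
  The twist F(s) is unipotent, F = 1 - n with n n = 0, so its inverse is 1 + n, and
  R(u,s) = F_21 R(u) F_12^(-1) is computed entrywise: up to the factor rho(u)/(u+1) it maps
  e_a \<otimes> e_b to u c_ab e_a \<otimes> e_b + (1 + 2u/(x_a - x_b)) e_b \<otimes> e_a, where c_ab is 1 for a \<le> b
  and 1 - 4/(x_a - x_b)^2 otherwise. Replacing s by s + h^vee on e_c moves every x_a by -2/N and
  x_c by 2 more; as only differences x_a - x_b enter, the dynamical shift is just x_c \<mapsto> x_c + 2.
  All operators in the Yang--Baxter equation permute tensor indices, so an entry of either side
  vanishes unless the two index triples are rearrangements of each other, and the remaining
  entries are rational identities in x_a, x_b, x_c, \<beta>, \<beta>' for labels taking at most three
  values; genericity of s keeps all denominators nonzero.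
\<close>

lemma finite_idx: "finite (idx N k)"
proof -
  have "idx N k = {xs. set xs \<subseteq> {1..N} \<and> length xs = k}" unfolding idx_def by auto
  then show ?thesis using finite_lists_length_eq[of "{1..N}" k] by simp
qed

lemma idx_2_iff: "[p, q] \<in> idx N 2 \<longleftrightarrow> p \<in> {1..N} \<and> q \<in> {1..N}"
  by (auto simp: idx_def)

lemma idx_3_iff: "[p, q, r] \<in> idx N 3 \<longleftrightarrow> p \<in> {1..N} \<and> q \<in> {1..N} \<and> r \<in> {1..N}"
  by (auto simp: idx_def)

lemma idx_2E:
  assumes "I \<in> idx N 2"
  obtains p q where "I = [p, q]" "p \<in> {1..N}" "q \<in> {1..N}"
proof -
  from assms have "length I = 2" "set I \<subseteq> {1..N}" by (auto simp: idx_def)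
  then obtain p q where "I = [p, q]" by (metis length_0_conv length_Suc_conv numeral_2_eq_2)
  with \<open>set I \<subseteq> {1..N}\<close> show thesis using that by auto
qed

lemma idx_3E:
  assumes "I \<in> idx N 3"
  obtains p q r where "I = [p, q, r]" "p \<in> {1..N}" "q \<in> {1..N}" "r \<in> {1..N}"
proof -
  from assms have "length I = 3" "set I \<subseteq> {1..N}" by (auto simp: idx_def)
  then obtain p q r where "I = [p, q, r]" by (metis length_0_conv length_Suc_conv numeral_3_eq_3)
  with \<open>set I \<subseteq> {1..N}\<close> show thesis using that by auto
qed

lemma mmul_assoc: "mmul N k (mmul N k A B) C I J = mmul N k A (mmul N k B C) I J"
  unfolding mmul_def
  by (simp add: sum_distrib_left sum_distrib_right mult.assoc) (rule sum.swap)

lemma mmul_mone_left: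
  assumes "I \<in> idx N k"
  shows "mmul N k mone B I J = B I J"
proof -
  have "mmul N k mone B I J = (\<Sum>K\<in>idx N k. if I = K then B K J else 0)"
    unfolding mmul_def mone_def by (rule sum.cong) auto
  then show ?thesis using assms by (simp add: finite_idx)
qed

lemma mmul_mone_right:
  assumes "J \<in> idx N k"
  shows "mmul N k A mone I J = A I J"
proof -
  have "mmul N k A mone I J = (\<Sum>K\<in>idx N k. if K = J then A I K else 0)"
    unfolding mmul_def mone_def by (rule sum.cong) auto
  then show ?thesis using assms by (simp add: finite_idx)
qed

lemma mmul_cong_left:
  "(\<And>K. K \<in> idx N k \<Longrightarrow> A I K = A' I K) \<Longrightarrow> mmul N k A B I J = mmul N k A' B I J"
  unfolding mmul_def by (rule sum.cong) auto

lemma mmul_cong_right: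
  "(\<And>K. K \<in> idx N k \<Longrightarrow> B K J = B' K J) \<Longrightarrow> mmul N k A B I J = mmul N k A B' I J"
  unfolding mmul_def by (rule sum.cong) auto

lemma mmul_row_two_entries:
  assumes "I\<^sub>1 \<in> idx N k" "I\<^sub>2 \<in> idx N k"
    and "\<And>K. K \<in> idx N k \<Longrightarrow> A I K = (if K = I\<^sub>1 then \<alpha> else 0) + (if K = I\<^sub>2 then \<gamma> else 0)"
  shows "mmul N k A B I J = \<alpha> * B I\<^sub>1 J + \<gamma> * B I\<^sub>2 J"
proof -
  have "mmul N k A B I J =
      (\<Sum>K\<in>idx N k. (if K = I\<^sub>1 then \<alpha> * B K J else 0) + (if K = I\<^sub>2 then \<gamma> * B K J else 0))"
    unfolding mmul_def by (rule sum.cong) (auto simp: assms(3) distrib_right)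
  also have "\<dots> = \<alpha> * B I\<^sub>1 J + \<gamma> * B I\<^sub>2 J"
    by (simp add: sum.distrib finite_idx assms(1,2))
  finally show ?thesis .
qed

lemma minv_eqI:
  assumes AB: "\<And>I J. I \<in> idx N k \<Longrightarrow> J \<in> idx N k \<Longrightarrow> mmul N k A B I J = mone I J"
    and BA: "\<And>I J. I \<in> idx N k \<Longrightarrow> J \<in> idx N k \<Longrightarrow> mmul N k B A I J = mone I J"
    and B0: "\<And>I J. I \<notin> idx N k \<or> J \<notin> idx N k \<Longrightarrow> B I J = 0"
    and I: "I \<in> idx N k" and J: "J \<in> idx N k"
  shows "minv N k A I J = B I J"
proof -
  let ?B' = "minv N k A"
  have "\<forall>K\<in>idx N k. \<forall>L\<in>idx N k. mmul N k A ?B' K L = mone K L"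
    using someI[where P = "\<lambda>B. (\<forall>I J. (I \<notin> idx N k \<or> J \<notin> idx N k) \<longrightarrow> B I J = 0) \<and>
      (\<forall>I\<in>idx N k. \<forall>J\<in>idx N k. mmul N k A B I J = mone I J \<and> mmul N k B A I J = mone I J)"]
      AB BA B0 unfolding minv_def by blast
  then have AB': "mmul N k A ?B' K J = mone K J" if "K \<in> idx N k" for K
    using that J by blast
  have "?B' I J = mmul N k mone ?B' I J" using I by (simp add: mmul_mone_left)
  also have "\<dots> = mmul N k (mmul N k B A) ?B' I J" by (rule mmul_cong_left) (simp add: BA I)
  also have "\<dots> = mmul N k B (mmul N k A ?B') I J" by (rule mmul_assoc)
  also have "\<dots> = mmul N k B mone I J" by (rule mmul_cong_right) (simp add: AB')
  also have "\<dots> = B I J" using J by (simp add: mmul_mone_right)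
  finally show ?thesis .
qed

section \<open>The twist and its inverse\<close>

definition Fcoef :: "(nat \<Rightarrow> complex) \<Rightarrow> nat \<Rightarrow> nat \<Rightarrow> complex" where
  "Fcoef X p q = (if p < q then 2 / (X p - X q) else 0)"

lemma Fmat_row:
  assumes "p \<in> {1..N}" "q \<in> {1..N}" "K \<in> idx N 2"
  shows "Fmat N s [p, q] K =
    (if K = [p, q] then 1 else 0) + (if K = [q, p] then - Fcoef (xcoord N s) p q else 0)"
proof -
  obtain k\<^sub>0 k\<^sub>1 where K: "K = [k\<^sub>0, k\<^sub>1]" using assms(3) by (rule idx_2E)
  let ?t = "\<lambda>a b. if k\<^sub>0 = q \<and> k\<^sub>1 = p then 2 / (xcoord N s a - xcoord N s b) else 0"
  have summand: "2 / (xcoord N s a - xcoord N s b) * tens2 (elem a b) (elem b a) [p, q] [k\<^sub>0, k\<^sub>1] =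
      (if a = p then if b = q then ?t a b else 0 else 0)" for a b
    by (simp add: tens2_def elem_def)
  have "(\<Sum>a\<in>{1..N}. \<Sum>b\<in>{a<..N}.
          2 / (xcoord N s a - xcoord N s b) * tens2 (elem a b) (elem b a) [p, q] [k\<^sub>0, k\<^sub>1])
      = (\<Sum>a\<in>{1..N}. \<Sum>b\<in>{a<..N}. if a = p then if b = q then ?t a b else 0 else 0)"
    by (simp only: summand)
  also have "\<dots> = (\<Sum>a\<in>{1..N}. if a = p then \<Sum>b\<in>{p<..N}. if b = q then ?t p b else 0 else 0)"
    by (intro sum.cong refl) auto
  also have "\<dots> = (if p < q then ?t p q else 0)"
    using assms(1,2) by simp
  finally show ?thesis
    unfolding Fmat_def K mone_def Fcoef_def
    by (cases "p < q"; cases "k\<^sub>0 = q"; cases "k\<^sub>1 = p"; cases "k\<^sub>0 = p"; cases "k\<^sub>1 = q") simp_all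
qed

definition Fmat_inv :: "nat \<Rightarrow> (nat \<Rightarrow> complex) \<Rightarrow> op" where
  "Fmat_inv N s I J = (if I \<in> idx N 2 \<and> J \<in> idx N 2 then
      (if J = I then 1 else 0) + (if J = rev I then Fcoef (xcoord N s) (I!0) (I!1) else 0) else 0)"

lemma Fmat_inv_row:
  assumes "p \<in> {1..N}" "q \<in> {1..N}" "K \<in> idx N 2"
  shows "Fmat_inv N s [p, q] K =
    (if K = [p, q] then 1 else 0) + (if K = [q, p] then Fcoef (xcoord N s) p q else 0)"
  using assms by (simp add: Fmat_inv_def idx_2_iff)

lemma minv_Fmat:
  assumes "I \<in> idx N 2" "J \<in> idx N 2"
  shows "minv N 2 (Fmat N s) I J = Fmat_inv N s I J"
proof (rule minv_eqI[OF _ _ _ assms])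
  fix I J assume I: "I \<in> idx N 2" and J: "J \<in> idx N 2"
  obtain p q where pq: "I = [p, q]" "p \<in> {1..N}" "q \<in> {1..N}" using I by (rule idx_2E)
  have "mmul N 2 (Fmat N s) (Fmat_inv N s) I J
      = Fmat_inv N s [p, q] J - Fcoef (xcoord N s) p q * Fmat_inv N s [q, p] J"
    unfolding pq(1) using pq(2,3) by (subst mmul_row_two_entries) (auto simp: idx_2_iff Fmat_row)
  also have "\<dots> = mone I J"
    unfolding pq(1) mone_def using pq(2,3) J
    by (cases "p = q"; cases "J = [p, q]"; cases "J = [q, p]") (auto simp: Fmat_inv_row Fcoef_def)
  finally show "mmul N 2 (Fmat N s) (Fmat_inv N s) I J = mone I J" .
  have "mmul N 2 (Fmat_inv N s) (Fmat N s) I J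
      = Fmat N s [p, q] J + Fcoef (xcoord N s) p q * Fmat N s [q, p] J"
    unfolding pq(1) using pq(2,3) by (subst mmul_row_two_entries) (auto simp: idx_2_iff Fmat_inv_row)
  also have "\<dots> = mone I J"
    unfolding pq(1) mone_def using pq(2,3) J
    by (cases "p = q"; cases "J = [p, q]"; cases "J = [q, p]") (auto simp: Fmat_row Fcoef_def)
  finally show "mmul N 2 (Fmat_inv N s) (Fmat N s) I J = mone I J" .
qed (auto simp: Fmat_inv_def)

section \<open>Entries of the dynamical R-matrix\<close>

definition diag_coeff :: "(nat \<Rightarrow> complex) \<Rightarrow> nat \<Rightarrow> nat \<Rightarrow> complex" where
  "diag_coeff X p q = (if p \<le> q then 1 else 1 - 4 / (X p - X q)\<^sup>2)"

definition swap_coeff :: "(nat \<Rightarrow> complex) \<Rightarrow> complex \<Rightarrow> nat \<Rightarrow> nat \<Rightarrow> complex" where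
  "swap_coeff X u p q = 1 + 2 * u / (X p - X q)"

text \<open>R(u,s) up to the factor rho(u)/(u+1). For I = [a, a] both summands contribute, and
  \<open>swap_coeff X u a a = 1\<close> because division by zero yields 0, so the entry is u + 1.\<close>

definition rmat :: "(nat \<Rightarrow> complex) \<Rightarrow> complex \<Rightarrow> op" where
  "rmat X u I J = (if J = I then u * diag_coeff X (I!0) (I!1) else 0)
     + (if J = rev I then swap_coeff X u (I!0) (I!1) else 0)"

lemma rmat_pair:
  "rmat X u [p, q] J =
    (if J = [p, q] then u * diag_coeff X p q else 0) + (if J = [q, p] then swap_coeff X u p q else 0)"
proof -
  have "[p, q] ! 0 = p" "[p, q] ! 1 = q" "rev [p, q] = [q, p]" by simp_all
  then show ?thesis unfolding rmat_def by (simp only:)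
qed

lemma flipP_row:
  assumes "K \<in> idx N 2"
  shows "flipP [p, q] K = (if K = [q, p] then 1 else 0)"
proof -
  obtain k\<^sub>0 k\<^sub>1 where K: "K = [k\<^sub>0, k\<^sub>1]" using assms by (rule idx_2E)
  show ?thesis unfolding K flipP_def by auto
qed

lemma Fmat21_row:
  assumes "p \<in> {1..N}" "q \<in> {1..N}" "K \<in> idx N 2"
  shows "Fmat21 N s [p, q] K =
    (if K = [p, q] then 1 else 0) + (if K = [q, p] then - Fcoef (xcoord N s) q p else 0)"
proof -
  have "Fmat21 N s [p, q] K = 0 * mmul N 2 (Fmat N s) flipP [p, q] K + 1 * mmul N 2 (Fmat N s) flipP [q, p] K"
    unfolding Fmat21_def using assms(1,2)
    by (intro mmul_row_two_entries) (auto simp: idx_2_iff flipP_row)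
  also have "\<dots> = mmul N 2 (Fmat N s) flipP [q, p] K" by simp
  also have "\<dots> = 1 * flipP [q, p] K + (- Fcoef (xcoord N s) q p) * flipP [p, q] K"
    using assms(1,2) by (intro mmul_row_two_entries) (auto simp: idx_2_iff Fmat_row)
  finally show ?thesis
    using assms(3) by (simp add: flipP_row)
qed

lemma Ryang_row:
  assumes "K \<in> idx N 2"
  shows "Ryang N u [p, q] K =
    (if K = [p, q] then rho N u / (u + 1) * u else 0) + (if K = [q, p] then rho N u / (u + 1) else 0)"
proof -
  obtain k\<^sub>0 k\<^sub>1 where K: "K = [k\<^sub>0, k\<^sub>1]" using assms by (rule idx_2E)
  show ?thesis
    unfolding K Ryang_def mone_def flipP_def
    by (cases "k\<^sub>0 = p"; cases "k\<^sub>1 = q"; cases "k\<^sub>0 = q"; cases "k\<^sub>1 = p") (simp_all add: distrib_left)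
qed

lemma Rdyn_entry:
  assumes "I \<in> idx N 2" "J \<in> idx N 2"
  shows "Rdyn N u s I J = rho N u / (u + 1) * rmat (xcoord N s) u I J"
proof -
  obtain p q where pq: "I = [p, q]" "p \<in> {1..N}" "q \<in> {1..N}" using assms(1) by (rule idx_2E)
  let ?r = "rho N u / (u + 1)" and ?X = "xcoord N s"
  let ?M = "mmul N 2 (Ryang N u) (minv N 2 (Fmat N s))"
  have M: "?M [a, b] J = ?r * (u * Fmat_inv N s [a, b] J + Fmat_inv N s [b, a] J)"
    if "a \<in> {1..N}" "b \<in> {1..N}" for a b
  proof -
    have "?M [a, b] J = ?r * u * minv N 2 (Fmat N s) [a, b] J + ?r * minv N 2 (Fmat N s) [b, a] J"
      using that by (intro mmul_row_two_entries) (auto simp: idx_2_iff Ryang_row)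
    then show ?thesis
      using that assms(2) by (simp add: minv_Fmat idx_2_iff algebra_simps)
  qed
  have "Rdyn N u s [p, q] J = 1 * ?M [p, q] J + (- Fcoef ?X q p) * ?M [q, p] J"
    unfolding Rdyn_def using pq(2,3) assms(2)
    by (intro mmul_row_two_entries) (auto simp: idx_2_iff Fmat21_row)
  also have "\<dots> = ?r * (u * Fmat_inv N s [p, q] J + Fmat_inv N s [q, p] J
      - Fcoef ?X q p * (u * Fmat_inv N s [q, p] J + Fmat_inv N s [p, q] J))"
    using pq(2,3) by (simp add: M algebra_simps)
  also have "\<dots> = ?r * rmat ?X u [p, q] J"
  proof (cases p q rule: linorder_cases)
    case less
    then have "p \<noteq> q" "q \<noteq> p" by simp_all
    with less pq(2,3) show ?thesis
      by (simp add: Fmat_inv_row[OF _ _ assms(2)] rmat_pair Fcoef_def diag_coeff_def swap_coeff_def)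
  next
    case equal
    with pq(2,3) show ?thesis
      by (simp add: Fmat_inv_row[OF _ _ assms(2)] rmat_pair Fcoef_def diag_coeff_def swap_coeff_def)
  next
    case greater
    define g where "g = 2 / (?X q - ?X p)"
    have "Fcoef ?X q p = g" "Fcoef ?X p q = 0" using greater by (simp_all add: Fcoef_def g_def)
    moreover have "4 / (?X p - ?X q)\<^sup>2 = g * g"
      unfolding g_def by (simp add: power2_eq_square) (simp add: algebra_simps)
    moreover have "2 * u / (?X p - ?X q) = - (u * g)"
      unfolding g_def by (metis divide_minus_right minus_diff_eq mult.commute times_divide_eq_right)
    moreover have "p \<noteq> q" "q \<noteq> p" using greater by simp_all
    ultimately show ?thesis using greater pq(2,3)
      by (simp add: Fmat_inv_row[OF _ _ assms(2)] rmat_pair diag_coeff_def swap_coeff_def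
          algebra_simps diff_divide_distrib)
  qed
  finally show ?thesis unfolding pq(1) .
qed

section \<open>The dynamical shift\<close>

lemma invcartan_zero: "invcartan N 0 j = 0" "invcartan N i 0 = 0"
  by (simp_all add: invcartan_def)

lemma invcartan_N:
  "0 < N \<Longrightarrow> i \<le> N \<Longrightarrow> invcartan N i N = 0"
  "0 < N \<Longrightarrow> j \<le> N \<Longrightarrow> invcartan N N j = 0"
  by (simp_all add: invcartan_def min_def)

lemma hvee_eig_eq:
  assumes "0 < N" "i \<le> N" "c \<in> {1..N}"
  shows "hvee_eig N i c = invcartan N i c - invcartan N i (c - 1)"
proof -
  have "hvee_eig N i c = (\<Sum>j\<in>{1..N-1}. if j = c then invcartan N i j else 0)
                        - (\<Sum>j\<in>{1..N-1}. if j = c - 1 then invcartan N i j else 0)"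
    unfolding hvee_eig_def sum_subtractf[symmetric]
    using assms(3) by (intro sum.cong) auto
  also have "\<dots> = invcartan N i c - invcartan N i (c - 1)"
    using assms invcartan_N(1)[OF assms(1,2)] invcartan_zero by (cases "c = N"; cases "c = 1") auto
  finally show ?thesis .
qed

lemma invcartan_mixed_diff:
  "invcartan N (Suc a) (Suc c) - invcartan N (Suc a) c - (invcartan N a (Suc c) - invcartan N a c)
    = (if a = c then 1 else 0) - 1 / of_nat N"
proof -
  define w where "w = 1 / (of_nat N :: complex)"
  have inv: "invcartan N i j = of_nat (min i j) - of_nat (i * j) * w" for i j
    unfolding invcartan_def w_def by simp
  have "int (min (Suc a) (Suc c)) - int (min (Suc a) c) - int (min a (Suc c)) + int (min a c)
      = (if a = c then 1 else 0)"
    by (cases a c rule: linorder_cases) auto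
  then have "(of_nat (min (Suc a) (Suc c)) - of_nat (min (Suc a) c) - of_nat (min a (Suc c))
      + of_nat (min a c) :: complex) = (if a = c then 1 else 0)"
    by (metis (mono_tags) of_int_1 of_int_0 of_int_add of_int_diff of_int_of_nat_eq)
  moreover have "(of_nat (Suc a * Suc c) - of_nat (Suc a * c) - (of_nat (a * Suc c) - of_nat (a * c))
      :: complex) = 1"
    by (simp add: algebra_simps)
  moreover have "invcartan N (Suc a) (Suc c) - invcartan N (Suc a) c - (invcartan N a (Suc c) - invcartan N a c)
      = (of_nat (min (Suc a) (Suc c)) - of_nat (min (Suc a) c) - of_nat (min a (Suc c)) + of_nat (min a c))
        - (of_nat (Suc a * Suc c) - of_nat (Suc a * c) - (of_nat (a * Suc c) - of_nat (a * c))) * w"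
    unfolding inv by (simp add: algebra_simps)
  ultimately show ?thesis unfolding w_def by simp
qed

lemma hvee_eig_boundary:
  assumes "0 < N" "c \<in> {1..N}"
  shows "hvee_eig N 0 c = 0" "hvee_eig N N c = 0"
proof -
  have "c - 1 \<le> N" "c \<le> N" using assms(2) by auto
  then show "hvee_eig N 0 c = 0" "hvee_eig N N c = 0"
    using assms by (simp_all add: hvee_eig_eq invcartan_zero invcartan_N(2))
qed

lemma xcoord_sshift:
  assumes "0 < N" "a \<in> {1..N}" "c \<in> {1..N}"
  shows "xcoord N (sshift N s c) a = xcoord N s a + (if a = c then 2 else 0) - 2 / of_nat N"
proof -
  let ?sv = "\<lambda>i. if 1 \<le> i \<and> i \<le> N - 1 then s i else 0"
  let ?sv' = "\<lambda>i. if 1 \<le> i \<and> i \<le> N - 1 then sshift N s c i else 0"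
  have sv': "?sv' i = ?sv i + hvee_eig N i c" if "i \<le> N" for i
    using that hvee_eig_boundary[OF assms(1,3)] by (cases "i = 0 \<or> i = N") (auto simp: sshift_def)
  have "a \<le> N" "a - 1 \<le> N" "a - 1 = c - 1 \<longleftrightarrow> a = c" using assms(2,3) by auto
  note sv'_a = sv'[OF this(1)] and sv'_a1 = sv'[OF this(2)] and index_eq = this(3)
  have "xcoord N (sshift N s c) a = 2 * ?sv' a - 2 * ?sv' (a - 1)"
    unfolding xcoord_def Let_def ..
  also have "\<dots> = 2 * ?sv a - 2 * ?sv (a - 1) + 2 * (hvee_eig N a c - hvee_eig N (a - 1) c)"
    by (simp only: sv'_a sv'_a1) (simp add: algebra_simps)
  also have "hvee_eig N a c - hvee_eig N (a - 1) c = (if a = c then 1 else 0) - 1 / of_nat N"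
    using assms \<open>a \<le> N\<close> \<open>a - 1 \<le> N\<close> index_eq invcartan_mixed_diff[of N "a - 1" "c - 1"]
    by (simp add: hvee_eig_eq)
  also have "2 * ?sv a - 2 * ?sv (a - 1) = xcoord N s a"
    unfolding xcoord_def Let_def ..
  finally show ?thesis by (simp add: algebra_simps)
qed

definition xshift :: "(nat \<Rightarrow> complex) \<Rightarrow> nat \<Rightarrow> nat \<Rightarrow> complex" where
  "xshift X c p = X p + (if p = c then 2 else 0)"

lemma rmat_translate:
  assumes "\<And>p. p \<in> {1..N} \<Longrightarrow> Y p = Z p + k" "I \<in> idx N 2"
  shows "rmat Y u I J = rmat Z u I J"
proof -
  obtain p q where I: "I = [p, q]" "p \<in> {1..N}" "q \<in> {1..N}" using assms(2) by (rule idx_2E)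
  then have "Y p - Y q = Z p - Z q" using assms(1) by simp
  then have "diag_coeff Y p q = diag_coeff Z p q" "swap_coeff Y u p q = swap_coeff Z u p q"
    unfolding diag_coeff_def swap_coeff_def by simp_all
  then show ?thesis unfolding I(1) rmat_pair by (simp only:)
qed

definition rmat_family ::
    "nat \<Rightarrow> (nat \<Rightarrow> op) \<Rightarrow> complex \<Rightarrow> complex \<Rightarrow> (nat \<Rightarrow> nat \<Rightarrow> complex) \<Rightarrow> bool"
  where "rmat_family N G r u Y \<longleftrightarrow>
    (\<forall>c\<in>{1..N}. \<forall>I\<in>idx N 2. \<forall>J\<in>idx N 2. G c I J = r * rmat (Y c) u I J)"

lemma rmat_family_Rdyn: "rmat_family N (\<lambda>c. Rdyn N u s) (rho N u / (u + 1)) u (\<lambda>c. xcoord N s)"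
  by (simp add: rmat_family_def Rdyn_entry)

lemma rmat_family_Rdyn_sshift:
  assumes "0 < N"
  shows "rmat_family N (\<lambda>c. Rdyn N u (sshift N s c)) (rho N u / (u + 1)) u (xshift (xcoord N s))"
  unfolding rmat_family_def
proof (intro ballI)
  fix c I J assume c: "c \<in> {1..N}" and I: "I \<in> idx N 2" and J: "J \<in> idx N 2"
  have "xcoord N (sshift N s c) p = xshift (xcoord N s) c p + - 2 / of_nat N" if "p \<in> {1..N}" for p
    using xcoord_sshift[OF assms that c] by (simp add: xshift_def)
  then show "Rdyn N u (sshift N s c) I J = rho N u / (u + 1) * rmat (xshift (xcoord N s) c) u I J"
    using rmat_translate[OF _ I] by (simp add: Rdyn_entry[OF I J])
qed

section \<open>Reduction of the Yang--Baxter equation to scalar identities\<close>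

definition act12 :: "(nat \<Rightarrow> complex) \<Rightarrow> complex \<Rightarrow> nat list \<Rightarrow> (nat list \<Rightarrow> complex) \<Rightarrow> complex" where
  "act12 X u K f = u * diag_coeff X (K!0) (K!1) * f K + swap_coeff X u (K!0) (K!1) * f [K!1, K!0, K!2]"

definition act13 :: "(nat \<Rightarrow> complex) \<Rightarrow> complex \<Rightarrow> nat list \<Rightarrow> (nat list \<Rightarrow> complex) \<Rightarrow> complex" where
  "act13 X u K f = u * diag_coeff X (K!0) (K!2) * f K + swap_coeff X u (K!0) (K!2) * f [K!2, K!1, K!0]"

definition act23 :: "(nat \<Rightarrow> complex) \<Rightarrow> complex \<Rightarrow> nat list \<Rightarrow> (nat list \<Rightarrow> complex) \<Rightarrow> complex" where
  "act23 X u K f = u * diag_coeff X (K!1) (K!2) * f K + swap_coeff X u (K!1) (K!2) * f [K!0, K!2, K!1]"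

lemma act_scale:
  "act12 X u K (\<lambda>L. r * f L) = r * act12 X u K f"
  "act13 X u K (\<lambda>L. r * f L) = r * act13 X u K f"
  "act23 X u K (\<lambda>L. r * f L) = r * act23 X u K f"
  by (simp_all add: act12_def act13_def act23_def algebra_simps)

lemma act_cong:
  assumes "K \<in> idx N 3" "\<And>L. L \<in> idx N 3 \<Longrightarrow> f L = g L"
  shows "act12 X u K f = act12 X u K g" "act13 X u K f = act13 X u K g" "act23 X u K f = act23 X u K g"
  using assms by (auto elim!: idx_3E simp: act12_def act13_def act23_def idx_3_iff)

lemma mmul_lift12:
  assumes G: "rmat_family N G r u Y" and K: "K \<in> idx N 3"
  shows "mmul N 3 (lift12 G) B K J = r * act12 (Y (K!2)) u K (\<lambda>L. B L J)"
proof -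
  obtain a b c where abc: "K = [a, b, c]" "a \<in> {1..N}" "b \<in> {1..N}" "c \<in> {1..N}"
    using K by (rule idx_3E)
  have "lift12 G [a, b, c] L = (if L = [a, b, c] then r * u * diag_coeff (Y c) a b else 0)
      + (if L = [b, a, c] then r * swap_coeff (Y c) u a b else 0)" if L_idx: "L \<in> idx N 3" for L
  proof -
    obtain l\<^sub>0 l\<^sub>1 l\<^sub>2 where L: "L = [l\<^sub>0, l\<^sub>1, l\<^sub>2]" "l\<^sub>0 \<in> {1..N}" "l\<^sub>1 \<in> {1..N}" "l\<^sub>2 \<in> {1..N}"
      using L_idx by (rule idx_3E)
    show ?thesis
      using G abc(2-4) L(2-4) unfolding L(1)
      by (cases "l\<^sub>2 = c") (simp_all add: lift12_def rmat_family_def idx_2_iff rmat_pair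
          distrib_left if_distrib[where f = "\<lambda>x. r * x"] mult.assoc split del: if_split cong: if_cong)
  qed
  then show ?thesis
    using abc by (subst mmul_row_two_entries) (auto simp: idx_3_iff act12_def algebra_simps)
qed

lemma mmul_lift13:
  assumes G: "rmat_family N G r u Y" and K: "K \<in> idx N 3"
  shows "mmul N 3 (lift13 G) B K J = r * act13 (Y (K!1)) u K (\<lambda>L. B L J)"
proof -
  obtain a b c where abc: "K = [a, b, c]" "a \<in> {1..N}" "b \<in> {1..N}" "c \<in> {1..N}"
    using K by (rule idx_3E)
  have "lift13 G [a, b, c] L = (if L = [a, b, c] then r * u * diag_coeff (Y b) a c else 0)
      + (if L = [c, b, a] then r * swap_coeff (Y b) u a c else 0)" if L_idx: "L \<in> idx N 3" for L
  proof -
    obtain l\<^sub>0 l\<^sub>1 l\<^sub>2 where L: "L = [l\<^sub>0, l\<^sub>1, l\<^sub>2]" "l\<^sub>0 \<in> {1..N}" "l\<^sub>1 \<in> {1..N}" "l\<^sub>2 \<in> {1..N}"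
      using L_idx by (rule idx_3E)
    show ?thesis
      using G abc(2-4) L(2-4) unfolding L(1)
      by (cases "l\<^sub>1 = b") (simp_all add: lift13_def rmat_family_def idx_2_iff rmat_pair
          distrib_left if_distrib[where f = "\<lambda>x. r * x"] mult.assoc split del: if_split cong: if_cong)
  qed
  then show ?thesis
    using abc by (subst mmul_row_two_entries) (auto simp: idx_3_iff act13_def algebra_simps)
qed

lemma mmul_lift23:
  assumes G: "rmat_family N G r u Y" and K: "K \<in> idx N 3"
  shows "mmul N 3 (lift23 G) B K J = r * act23 (Y (K!0)) u K (\<lambda>L. B L J)"
proof -
  obtain a b c where abc: "K = [a, b, c]" "a \<in> {1..N}" "b \<in> {1..N}" "c \<in> {1..N}"
    using K by (rule idx_3E)
  have "lift23 G [a, b, c] L = (if L = [a, b, c] then r * u * diag_coeff (Y a) b c else 0)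
      + (if L = [a, c, b] then r * swap_coeff (Y a) u b c else 0)" if L_idx: "L \<in> idx N 3" for L
  proof -
    obtain l\<^sub>0 l\<^sub>1 l\<^sub>2 where L: "L = [l\<^sub>0, l\<^sub>1, l\<^sub>2]" "l\<^sub>0 \<in> {1..N}" "l\<^sub>1 \<in> {1..N}" "l\<^sub>2 \<in> {1..N}"
      using L_idx by (rule idx_3E)
    show ?thesis
      using G abc(2-4) L(2-4) unfolding L(1)
      by (cases "l\<^sub>0 = a") (simp_all add: lift23_def rmat_family_def idx_2_iff rmat_pair
          distrib_left if_distrib[where f = "\<lambda>x. r * x"] mult.assoc split del: if_split cong: if_cong)
  qed
  then show ?thesis
    using abc by (subst mmul_row_two_entries) (auto simp: idx_3_iff act23_def algebra_simps)
qed

lemma lift12_entry: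
  "rmat_family N G r u Y \<Longrightarrow> K \<in> idx N 3 \<Longrightarrow> J \<in> idx N 3 \<Longrightarrow>
    lift12 G K J = r * act12 (Y (K!2)) u K (\<lambda>L. mone L J)"
  by (metis mmul_lift12 mmul_mone_right)

lemma lift23_entry:
  "rmat_family N G r u Y \<Longrightarrow> K \<in> idx N 3 \<Longrightarrow> J \<in> idx N 3 \<Longrightarrow>
    lift23 G K J = r * act23 (Y (K!0)) u K (\<lambda>L. mone L J)"
  by (metis mmul_lift23 mmul_mone_right)

lemma mmul_lift12_lift13_lift23:
  assumes G\<^sub>1: "rmat_family N G\<^sub>1 r\<^sub>1 u\<^sub>1 Y\<^sub>1" and G\<^sub>2: "rmat_family N G\<^sub>2 r\<^sub>2 u\<^sub>2 Y\<^sub>2"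
    and G\<^sub>3: "rmat_family N G\<^sub>3 r\<^sub>3 u\<^sub>3 Y\<^sub>3" and I: "I \<in> idx N 3" and J: "J \<in> idx N 3"
  shows "mmul N 3 (mmul N 3 (lift12 G\<^sub>1) (lift13 G\<^sub>2)) (lift23 G\<^sub>3) I J = r\<^sub>1 * r\<^sub>2 * r\<^sub>3 *
    act12 (Y\<^sub>1 (I!2)) u\<^sub>1 I (\<lambda>K. act13 (Y\<^sub>2 (K!1)) u\<^sub>2 K (\<lambda>L. act23 (Y\<^sub>3 (L!0)) u\<^sub>3 L (\<lambda>M. mone M J)))"
proof -
  have inner: "mmul N 3 (lift13 G\<^sub>2) (lift23 G\<^sub>3) K J
      = r\<^sub>2 * r\<^sub>3 * act13 (Y\<^sub>2 (K!1)) u\<^sub>2 K (\<lambda>L. act23 (Y\<^sub>3 (L!0)) u\<^sub>3 L (\<lambda>M. mone M J))"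
    if K: "K \<in> idx N 3" for K
    using mmul_lift13[OF G\<^sub>2 K] act_cong(2)[OF K lift23_entry[OF G\<^sub>3 _ J]]
    by (simp add: act_scale)
  have "mmul N 3 (mmul N 3 (lift12 G\<^sub>1) (lift13 G\<^sub>2)) (lift23 G\<^sub>3) I J
      = mmul N 3 (lift12 G\<^sub>1) (mmul N 3 (lift13 G\<^sub>2) (lift23 G\<^sub>3)) I J"
    by (rule mmul_assoc)
  also have "\<dots> = r\<^sub>1 * act12 (Y\<^sub>1 (I!2)) u\<^sub>1 I (\<lambda>K. mmul N 3 (lift13 G\<^sub>2) (lift23 G\<^sub>3) K J)"
    by (rule mmul_lift12[OF G\<^sub>1 I])
  also have "\<dots> = r\<^sub>1 * r\<^sub>2 * r\<^sub>3 *
      act12 (Y\<^sub>1 (I!2)) u\<^sub>1 I (\<lambda>K. act13 (Y\<^sub>2 (K!1)) u\<^sub>2 K (\<lambda>L. act23 (Y\<^sub>3 (L!0)) u\<^sub>3 L (\<lambda>M. mone M J)))"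
    using act_cong(1)[OF I inner] by (simp add: act_scale mult.assoc)
  finally show ?thesis .
qed

lemma mmul_lift23_lift13_lift12:
  assumes G\<^sub>1: "rmat_family N G\<^sub>1 r\<^sub>1 u\<^sub>1 Y\<^sub>1" and G\<^sub>2: "rmat_family N G\<^sub>2 r\<^sub>2 u\<^sub>2 Y\<^sub>2"
    and G\<^sub>3: "rmat_family N G\<^sub>3 r\<^sub>3 u\<^sub>3 Y\<^sub>3" and I: "I \<in> idx N 3" and J: "J \<in> idx N 3"
  shows "mmul N 3 (mmul N 3 (lift23 G\<^sub>3) (lift13 G\<^sub>2)) (lift12 G\<^sub>1) I J = r\<^sub>1 * r\<^sub>2 * r\<^sub>3 *
    act23 (Y\<^sub>3 (I!0)) u\<^sub>3 I (\<lambda>K. act13 (Y\<^sub>2 (K!1)) u\<^sub>2 K (\<lambda>L. act12 (Y\<^sub>1 (L!2)) u\<^sub>1 L (\<lambda>M. mone M J)))"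
proof -
  have inner: "mmul N 3 (lift13 G\<^sub>2) (lift12 G\<^sub>1) K J
      = r\<^sub>2 * r\<^sub>1 * act13 (Y\<^sub>2 (K!1)) u\<^sub>2 K (\<lambda>L. act12 (Y\<^sub>1 (L!2)) u\<^sub>1 L (\<lambda>M. mone M J))"
    if K: "K \<in> idx N 3" for K
    using mmul_lift13[OF G\<^sub>2 K] act_cong(2)[OF K lift12_entry[OF G\<^sub>1 _ J]]
    by (simp add: act_scale)
  have "mmul N 3 (mmul N 3 (lift23 G\<^sub>3) (lift13 G\<^sub>2)) (lift12 G\<^sub>1) I J
      = mmul N 3 (lift23 G\<^sub>3) (mmul N 3 (lift13 G\<^sub>2) (lift12 G\<^sub>1)) I J"
    by (rule mmul_assoc)
  also have "\<dots> = r\<^sub>3 * act23 (Y\<^sub>3 (I!0)) u\<^sub>3 I (\<lambda>K. mmul N 3 (lift13 G\<^sub>2) (lift12 G\<^sub>1) K J)"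
    by (rule mmul_lift23[OF G\<^sub>3 I])
  also have "\<dots> = r\<^sub>1 * r\<^sub>2 * r\<^sub>3 *
      act23 (Y\<^sub>3 (I!0)) u\<^sub>3 I (\<lambda>K. act13 (Y\<^sub>2 (K!1)) u\<^sub>2 K (\<lambda>L. act12 (Y\<^sub>1 (L!2)) u\<^sub>1 L (\<lambda>M. mone M J)))"
    using act_cong(3)[OF I inner] by (simp add: act_scale mult_ac)
  finally show ?thesis .
qed

text \<open>The two sides of the dynamical Yang--Baxter equation, divided by r(\<beta>) r(\<beta> + \<beta>') r(\<beta>')
  with r(u) = rho(u)/(u+1).\<close>

definition ybe_lhs :: "(nat \<Rightarrow> complex) \<Rightarrow> complex \<Rightarrow> complex \<Rightarrow> op" where
  "ybe_lhs X \<beta> \<beta>' I J = act12 (xshift X (I!2)) \<beta> I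
     (\<lambda>K. act13 X (\<beta> + \<beta>') K (\<lambda>L. act23 (xshift X (L!0)) \<beta>' L (\<lambda>M. mone M J)))"

definition ybe_rhs :: "(nat \<Rightarrow> complex) \<Rightarrow> complex \<Rightarrow> complex \<Rightarrow> op" where
  "ybe_rhs X \<beta> \<beta>' I J = act23 X \<beta>' I
     (\<lambda>K. act13 (xshift X (K!1)) (\<beta> + \<beta>') K (\<lambda>L. act12 X \<beta> L (\<lambda>M. mone M J)))"

definition generic_on :: "(nat \<Rightarrow> complex) \<Rightarrow> nat set \<Rightarrow> bool" where
  "generic_on X S \<longleftrightarrow> (\<forall>p\<in>S. \<forall>q\<in>S. p \<noteq> q \<longrightarrow> X p - X q \<notin> {0, 2, -2})"

lemma generic_onD:
  assumes "generic_on X S" "p \<in> S" "q \<in> S" "p \<noteq> q"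
  shows "X p \<noteq> X q" "X p \<noteq> X q + 2"
  using assms unfolding generic_on_def by (metis add_diff_cancel_left' add.commute insertCI right_minus_eq)+

definition perms3 :: "nat \<Rightarrow> nat \<Rightarrow> nat \<Rightarrow> nat list set" where
  "perms3 a b c = {[a, b, c], [a, c, b], [b, a, c], [b, c, a], [c, a, b], [c, b, a]}"

lemma ybe_vanish:
  assumes "J \<notin> perms3 a b c"
  shows "ybe_lhs X \<beta> \<beta>' [a, b, c] J = 0" "ybe_rhs X \<beta> \<beta>' [a, b, c] J = 0"
  using assms by (auto simp: perms3_def ybe_lhs_def ybe_rhs_def act12_def act13_def act23_def mone_def)

lemma ybe_three_values:
  assumes "x < y" "y < z" "generic_on X {x, y, z}"
  shows "\<forall>I\<in>perms3 x y z. \<forall>J\<in>perms3 x y z. ybe_lhs X \<beta> \<beta>' I J = ybe_rhs X \<beta> \<beta>' I J"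
proof -
  have ne: "X x \<noteq> X y" "X y \<noteq> X x" "X x \<noteq> X z" "X z \<noteq> X x" "X y \<noteq> X z" "X z \<noteq> X y"
    "X x \<noteq> X y + 2" "X y \<noteq> X x + 2" "X x \<noteq> X z + 2" "X z \<noteq> X x + 2" "X y \<noteq> X z + 2" "X z \<noteq> X y + 2"
    using generic_onD[OF assms(3)] assms(1,2) by (metis insertCI less_irrefl less_trans)+
  \<comment> \<open>Clearing denominators yields conditions such as \<open>X z + 2 = X y\<close>; \<open>eq_commute\<close>
    orients them so that \<open>ne\<close> refutes them, leaving polynomial identities.\<close>
  show ?thesis
    using assms(1,2)
    apply (simp add: perms3_def ybe_lhs_def ybe_rhs_def act12_def act13_def act23_def xshift_def
        diag_coeff_def swap_coeff_def mone_def)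
    apply (simp add: divide_simps ne eq_commute[of "X _ + 2"])
    apply (intro conjI; algebra)
    done
qed

lemma ybe_two_values:
  assumes "x < z" "generic_on X {x, z}"
  shows "\<forall>I\<in>perms3 x x z. \<forall>J\<in>perms3 x x z. ybe_lhs X \<beta> \<beta>' I J = ybe_rhs X \<beta> \<beta>' I J"
    and "\<forall>I\<in>perms3 x z z. \<forall>J\<in>perms3 x z z. ybe_lhs X \<beta> \<beta>' I J = ybe_rhs X \<beta> \<beta>' I J"
proof -
  have ne: "X x \<noteq> X z" "X z \<noteq> X x" "X x \<noteq> X z + 2" "X z \<noteq> X x + 2"
    using generic_onD[OF assms(2)] assms(1) by (metis insertCI less_irrefl)+
  from assms(1)
  show "\<forall>I\<in>perms3 x x z. \<forall>J\<in>perms3 x x z. ybe_lhs X \<beta> \<beta>' I J = ybe_rhs X \<beta> \<beta>' I J"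
    and "\<forall>I\<in>perms3 x z z. \<forall>J\<in>perms3 x z z. ybe_lhs X \<beta> \<beta>' I J = ybe_rhs X \<beta> \<beta>' I J"
    apply (simp_all add: perms3_def ybe_lhs_def ybe_rhs_def act12_def act13_def act23_def xshift_def
        diag_coeff_def swap_coeff_def mone_def)
    apply (simp_all add: divide_simps ne eq_commute[of "X _ + 2"])
    apply (intro conjI; algebra)+
    done
qed

lemma ybe_one_value: "ybe_lhs X \<beta> \<beta>' [x, x, x] [x, x, x] = ybe_rhs X \<beta> \<beta>' [x, x, x] [x, x, x]"
  by (simp add: ybe_lhs_def ybe_rhs_def act12_def act13_def act23_def xshift_def
      diag_coeff_def swap_coeff_def mone_def algebra_simps)

lemma ybe_on_sorted_perms3:
  assumes "x \<le> y" "y \<le> z" "generic_on X {x, y, z}" "I \<in> perms3 x y z" "J \<in> perms3 x y z"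
  shows "ybe_lhs X \<beta> \<beta>' I J = ybe_rhs X \<beta> \<beta>' I J"
proof -
  consider "x < y" "y < z" | "x = y" "y < z" | "x < y" "y = z" | "x = y" "y = z"
    using assms(1,2) by linarith
  then show ?thesis
  proof cases
    case 1
    then show ?thesis using ybe_three_values assms(3-5) by blast
  next
    case 2
    then show ?thesis using ybe_two_values(1)[of y z X] assms(3-5) by simp
  next
    case 3
    then show ?thesis using ybe_two_values(2)[of x z X] assms(3-5) by simp
  next
    case 4
    then show ?thesis using ybe_one_value assms(4,5) by (simp add: perms3_def)
  qed
qed

lemma perms3_sorted:
  obtains x y z where "x \<le> y" "y \<le> z" "perms3 a b c = perms3 x y z" "{a, b, c} = {x, y, z}"
proof -
  consider "a \<le> b" "b \<le> c" | "a \<le> c" "c \<le> b" | "b \<le> a" "a \<le> c" | "b \<le> c" "c \<le> a"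
    | "c \<le> a" "a \<le> b" | "c \<le> b" "b \<le> a"
    by linarith
  then show thesis
    by cases (rule that, assumption, assumption, auto simp: perms3_def)+
qed

lemma ybe_identity:
  assumes "generic_on X {a, b, c}"
  shows "ybe_lhs X \<beta> \<beta>' [a, b, c] J = ybe_rhs X \<beta> \<beta>' [a, b, c] J"
proof (cases "J \<in> perms3 a b c")
  case True
  obtain x y z where "x \<le> y" "y \<le> z" "perms3 a b c = perms3 x y z" "{a, b, c} = {x, y, z}"
    by (rule perms3_sorted)
  moreover have "[a, b, c] \<in> perms3 a b c" by (simp add: perms3_def)
  ultimately show ?thesis using ybe_on_sorted_perms3 assms True by metis
qed (simp add: ybe_vanish)

lemma dynamical_ybe:
  assumes "0 < N" "generic_on (xcoord N s) {1..N}" "I \<in> idx N 3" "J \<in> idx N 3"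
  shows "mmul N 3 (mmul N 3 (lift12 (\<lambda>c. Rdyn N \<beta> (sshift N s c)))
        (lift13 (\<lambda>c. Rdyn N (\<beta> + \<beta>') s))) (lift23 (\<lambda>c. Rdyn N \<beta>' (sshift N s c))) I J
      = mmul N 3 (mmul N 3 (lift23 (\<lambda>c. Rdyn N \<beta>' s))
        (lift13 (\<lambda>c. Rdyn N (\<beta> + \<beta>') (sshift N s c)))) (lift12 (\<lambda>c. Rdyn N \<beta> s)) I J"
proof -
  obtain a b c where abc: "I = [a, b, c]" "a \<in> {1..N}" "b \<in> {1..N}" "c \<in> {1..N}"
    using assms(3) by (rule idx_3E)
  have "generic_on (xcoord N s) {a, b, c}"
    using assms(2) abc(2-4) unfolding generic_on_def by blast
  then show ?thesis
    using ybe_identity[of "xcoord N s" a b c \<beta> \<beta>' J]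
      mmul_lift12_lift13_lift23[OF rmat_family_Rdyn_sshift[OF assms(1)] rmat_family_Rdyn
        rmat_family_Rdyn_sshift[OF assms(1)] assms(3,4)]
      mmul_lift23_lift13_lift12[OF rmat_family_Rdyn rmat_family_Rdyn_sshift[OF assms(1)]
        rmat_family_Rdyn assms(3,4)]
    unfolding abc(1) ybe_lhs_def ybe_rhs_def by simp
qed

text \<open>Gamma vanishes at its poles in Isabelle, so \<open>Gamma1 0 = 0\<close> and \<open>rho N (-1) = 0\<close> by
  division by zero; this makes the diagonal entry equal rho(u) also at u = -1.\<close>

lemma rho_minus_one: "rho N (-1) = 0"
  by (simp add: rho_def Gamma1_def)

lemma Rdyn_diagonal: "a \<in> {1..N} \<Longrightarrow> Rdyn N u s [a, a] [a, a] = rho N u"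
  using Rdyn_entry[of "[a, a]" N "[a, a]" u s] rho_minus_one[of N]
  by (cases "u = -1") (simp_all add: idx_2_iff rmat_pair diag_coeff_def swap_coeff_def add_eq_0_iff2)

lemma Rdyn_off_diagonal:
  assumes "a \<in> {1..N}" "b \<in> {1..N}" "a \<noteq> b"
  shows "Rdyn N u s [a, b] [a, b] = rho N u / (u + 1) * (u * diag_coeff (xcoord N s) a b)"
    and "Rdyn N u s [a, b] [b, a] = rho N u / (u + 1) * swap_coeff (xcoord N s) u a b"
  using assms Rdyn_entry[of "[a, b]" N _ u s] by (simp_all add: idx_2_iff rmat_pair)

lemma Rdyn_vanishing:
  assumes I: "I \<in> idx N 2" and J: "J \<in> idx N 2" and IJ: "I \<noteq> J" "I \<noteq> rev J"
  shows "Rdyn N u s I J = 0"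
proof -
  obtain p q where "I = [p, q]" using I by (rule idx_2E)
  moreover from this IJ have "J \<noteq> [p, q]" "J \<noteq> [q, p]" by auto
  ultimately show ?thesis using Rdyn_entry[OF I J] by (simp add: rmat_pair)
qed

theorem mainTheorem2:
  fixes N :: nat and s :: "nat \<Rightarrow> complex" and u \<beta> \<beta>' :: complex
  assumes "N \<ge> 2"
    and generic: "\<forall>a\<in>{1..N}. \<forall>b\<in>{1..N}. a \<noteq> b \<longrightarrow>
                   xcoord N s a - xcoord N s b \<notin> {0, 2, -2}"
  shows "(\<forall>a\<in>{1..N}. Rdyn N u s [a, a] [a, a] = rho N u)
    \<and> (\<forall>a\<in>{1..N}. \<forall>b\<in>{1..N}. b > a \<longrightarrow>
         Rdyn N u s [a, b] [a, b] = rho N u * (u / (u + 1)))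
    \<and> (\<forall>a\<in>{1..N}. \<forall>b\<in>{1..N}. b < a \<longrightarrow>
         Rdyn N u s [a, b] [a, b] =
           rho N u * ((1 - 4 / (xcoord N s a - xcoord N s b)^2) * (u / (u + 1))))
    \<and> (\<forall>a\<in>{1..N}. \<forall>b\<in>{1..N}. a \<noteq> b \<longrightarrow>
         Rdyn N u s [a, b] [b, a] =
           rho N u * ((1 + 2 * u / (xcoord N s a - xcoord N s b)) * (1 / (u + 1))))
    \<and> (\<forall>I\<in>idx N 2. \<forall>J\<in>idx N 2. I \<noteq> J \<and> I \<noteq> rev J \<longrightarrow> Rdyn N u s I J = 0)
    \<and> (\<forall>I\<in>idx N 3. \<forall>J\<in>idx N 3.
         mmul N 3 (mmul N 3 (lift12 (\<lambda>c. Rdyn N \<beta> (sshift N s c)))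
                            (lift13 (\<lambda>c. Rdyn N (\<beta> + \<beta>') s)))
                  (lift23 (\<lambda>c. Rdyn N \<beta>' (sshift N s c))) I J
       = mmul N 3 (mmul N 3 (lift23 (\<lambda>c. Rdyn N \<beta>' s))
                            (lift13 (\<lambda>c. Rdyn N (\<beta> + \<beta>') (sshift N s c))))
                  (lift12 (\<lambda>c. Rdyn N \<beta> s)) I J)"
proof -
  have "0 < N" using assms(1) by simp
  moreover have "generic_on (xcoord N s) {1..N}" using generic by (simp add: generic_on_def)
  ultimately show ?thesis
    using Rdyn_diagonal Rdyn_off_diagonal Rdyn_vanishing dynamical_ybe
    by (auto simp: diag_coeff_def swap_coeff_def)
qed

end
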